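(* Let $q\geq 3$ be an odd integer. Then the group $G_{1,q}=\langle a,b,s,t\mid [a,b],\ s^{-1}a^qs=ab,\ t^{-1}a^qt=ab^{-1}\rangle$ is not Hopfian.
   Context: A group is Hopfian if every surjective endomorphism of it is injective. *)

theory Defs
  imports "HOL-Algebra.Algebra"
begin

text \<open>A letter is a pair (g, e): e = True stands for the generator g, e = False for its
  inverse. Words are lists of letters.\<close>

type_synonym 'g word = "('g \<times> bool) list"

definition inv_letter :: "'g \<times> bool \<Rightarrow> 'g \<times> bool" where
  "inv_letter x = (fst x, \<not> snd x)"

definition inv_word :: "'g word \<Rightarrow> 'g word" where
  "inv_word w = rev (map inv_letter w)"

inductive_set pres_eq :: "'g word set \<Rightarrow> ('g word \<times> 'g word) set" for R where
  cancel: "(u @ [x, inv_letter x] @ w, u @ w) \<in> pres_eq R"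
| rel: "r \<in> R \<Longrightarrow> (u @ r @ w, u @ w) \<in> pres_eq R"
| refl: "(w, w) \<in> pres_eq R"
| sym: "(v, w) \<in> pres_eq R \<Longrightarrow> (w, v) \<in> pres_eq R"
| trans: "(u, v) \<in> pres_eq R \<Longrightarrow> (v, w) \<in> pres_eq R \<Longrightarrow> (u, w) \<in> pres_eq R"

definition presented_group :: "'g word set \<Rightarrow> 'g word set monoid" where
  "presented_group R =
     \<lparr> carrier = UNIV // pres_eq R,
       monoid.mult = (\<lambda>U V. (\<Union>x\<in>U. (\<Union>y\<in>V. pres_eq R `` {x @ y}))),
       monoid.one = (pres_eq R `` {[]}) \<rparr>"

definition hopfian :: "('a, 'b) monoid_scheme \<Rightarrow> bool" where
  "hopfian G \<longleftrightarrow>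
     (\<forall>h \<in> hom G G. h ` carrier G = carrier G \<longrightarrow> inj_on h (carrier G))"

datatype gen = gA | gB | gS | gT

abbreviation (input) ltr :: "gen \<Rightarrow> gen word" where "ltr g \<equiv> [(g, True)]"
abbreviation (input) ltr_inv :: "gen \<Rightarrow> gen word" where "ltr_inv g \<equiv> [(g, False)]"

definition G1q_relators :: "nat \<Rightarrow> gen word set" where
  "G1q_relators q =
     { ltr_inv gA @ ltr_inv gB @ ltr gA @ ltr gB,
       ltr_inv gS @ concat (replicate q (ltr gA)) @ ltr gS @ inv_word (ltr gA @ ltr gB),
       ltr_inv gT @ concat (replicate q (ltr gA)) @ ltr gT @ inv_word (ltr gA @ ltr_inv gB) }"

definition G1q :: "nat \<Rightarrow> gen word set monoid" where
  "G1q q = presented_group (G1q_relators q)"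

end

theory Submission
  imports Defs
begin

text \<open>Let \<phi> be the endomorphism a \<mapsto> a^q, b \<mapsto> b^q, s \<mapsto> s, t \<mapsto> t; it respects the
  relators because conjugating (a^q)^q by s and t gives (ab)^q = a^q b^q and (ab^-1)^q = a^q b^-q.
  Its image contains ab = s^-1 a^q s and ab^-1 = t^-1 a^q t, hence a^2 and b^2, and together with
  a^q and b^q for odd q also a and b, so \<phi> is onto. But \<phi> maps s^-1 a s and t^-1 a t to the
  commuting elements ab and ab^-1, so it kills their commutator. That commutator is nontrivial:
  G acts on \<rat> with a as u \<mapsto> u + 1, b trivially, s as u \<mapsto> q u and t as u \<mapsto> q \<sigma>(u), where
  \<sigma> swaps n and n + 1/2 for every integer n; then s^-1 a s acts as translation by 1/q, and the
  commutator moves 0 to 1/2.\<close>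


section \<open>Presented groups\<close>

lemma pres_eq_equiv: "equiv UNIV (pres_eq R)"
  unfolding equiv_def refl_on_def sym_def trans_def
  by (auto intro: pres_eq.refl pres_eq.sym pres_eq.trans)

lemma pres_eq_append_context:
  "(u, v) \<in> pres_eq R \<Longrightarrow> (x @ u @ y, x @ v @ y) \<in> pres_eq R"
proof (induction rule: pres_eq.induct)
  case (cancel u z w)
  show ?case using pres_eq.cancel[where R=R and u="x @ u" and x=z and w="w @ y"] by simp
next
  case (rel r u w)
  show ?case using pres_eq.rel[OF rel(1), where u="x @ u" and w="w @ y"] by simp
qed (auto intro: pres_eq.refl pres_eq.sym pres_eq.trans)

lemma pres_eq_append:
  assumes "(u, u') \<in> pres_eq R" and "(v, v') \<in> pres_eq R"
  shows "(u @ v, u' @ v') \<in> pres_eq R"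
  using pres_eq_append_context[OF assms(1), of "[]" v] pres_eq_append_context[OF assms(2), of u' "[]"]
  by (auto intro: pres_eq.trans)

lemma pres_eq_inv_word_append: "(inv_word w @ w, []) \<in> pres_eq R"
proof (induction w)
  case Nil
  then show ?case by (simp add: inv_word_def pres_eq.refl)
next
  case (Cons x w)
  have "inv_word (x # w) @ x # w = inv_word w @ [inv_letter x, inv_letter (inv_letter x)] @ w"
    by (simp add: inv_word_def inv_letter_def)
  then have "(inv_word (x # w) @ x # w, inv_word w @ w) \<in> pres_eq R"
    by (simp only: pres_eq.cancel)
  then show ?case using Cons.IH by (rule pres_eq.trans)
qed

abbreviation word_class :: "'g word set \<Rightarrow> 'g word \<Rightarrow> 'g word set" where
  "word_class R w \<equiv> pres_eq R `` {w}"

lemma word_class_eq_iff: "word_class R u = word_class R v \<longleftrightarrow> (u, v) \<in> pres_eq R"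
  using eq_equiv_class_iff[OF pres_eq_equiv] by simp

lemma carrier_presented_group: "carrier (presented_group R) = range (word_class R)"
  unfolding presented_group_def quotient_def by auto

lemma one_presented_group: "\<one>\<^bsub>presented_group R\<^esub> = word_class R []"
  unfolding presented_group_def by simp

lemma mult_presented_group:
  "word_class R u \<otimes>\<^bsub>presented_group R\<^esub> word_class R v = word_class R (u @ v)"
proof -
  have "word_class R (x @ y) = word_class R (u @ v)"
    if "x \<in> word_class R u" "y \<in> word_class R v" for x y
    using that by (auto simp: word_class_eq_iff intro: pres_eq_append pres_eq.sym)
  moreover have "u \<in> word_class R u" "v \<in> word_class R v"
    by (simp_all add: pres_eq.refl)
  ultimately have "(\<Union>x\<in>word_class R u. \<Union>y\<in>word_class R v. word_class R (x @ y))
      = word_class R (u @ v)"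
    by blast
  then show ?thesis unfolding presented_group_def by simp
qed

lemma group_presented_group: "group (presented_group R)"
proof (rule groupI)
  fix x
  assume "x \<in> carrier (presented_group R)"
  then obtain w where w: "x = word_class R w" by (auto simp: carrier_presented_group)
  have "word_class R (inv_word w) \<otimes>\<^bsub>presented_group R\<^esub> x = \<one>\<^bsub>presented_group R\<^esub>"
    unfolding w mult_presented_group one_presented_group word_class_eq_iff
    by (rule pres_eq_inv_word_append)
  then show "\<exists>y\<in>carrier (presented_group R). y \<otimes>\<^bsub>presented_group R\<^esub> x = \<one>\<^bsub>presented_group R\<^esub>"
    by (auto simp: carrier_presented_group)
qed (auto simp: carrier_presented_group mult_presented_group one_presented_group)

lemma inv_presented_group:
  "inv\<^bsub>presented_group R\<^esub> (word_class R w) = word_class R (inv_word w)"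
proof (rule group.inv_equality[OF group_presented_group])
  show "word_class R (inv_word w) \<otimes>\<^bsub>presented_group R\<^esub> word_class R w = \<one>\<^bsub>presented_group R\<^esub>"
    unfolding mult_presented_group one_presented_group word_class_eq_iff
    by (rule pres_eq_inv_word_append)
qed (simp_all add: carrier_presented_group)

lemma word_class_relator: "r \<in> R \<Longrightarrow> word_class R r = \<one>\<^bsub>presented_group R\<^esub>"
  using pres_eq.rel[of r R "[]" "[]"] by (simp add: one_presented_group word_class_eq_iff)

definition eval_word :: "('b, 'c) monoid_scheme \<Rightarrow> ('g \<Rightarrow> 'b) \<Rightarrow> 'g word \<Rightarrow> 'b" where
  "eval_word H f w =
     foldr (\<lambda>l y. (if snd l then f (fst l) else inv\<^bsub>H\<^esub> (f (fst l))) \<otimes>\<^bsub>H\<^esub> y) w \<one>\<^bsub>H\<^esub>"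

lemma eval_word_Nil [simp]: "eval_word H f [] = \<one>\<^bsub>H\<^esub>"
  by (simp add: eval_word_def)

lemma eval_word_Cons [simp]:
  "eval_word H f (l # w) = (if snd l then f (fst l) else inv\<^bsub>H\<^esub> (f (fst l))) \<otimes>\<^bsub>H\<^esub> eval_word H f w"
  by (simp add: eval_word_def)

context group
begin

lemma eval_word_closed [simp]: "(\<And>g. f g \<in> carrier G) \<Longrightarrow> eval_word G f w \<in> carrier G"
  by (induction w) auto

lemma eval_word_append:
  "(\<And>g. f g \<in> carrier G) \<Longrightarrow> eval_word G f (u @ v) = eval_word G f u \<otimes> eval_word G f v"
  by (induction u) (auto simp: m_assoc)

lemma eval_word_inv_word:
  assumes f: "\<And>g. f g \<in> carrier G"
  shows "eval_word G f (inv_word w) = inv (eval_word G f w)"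
proof (induction w)
  case (Cons l w)
  have "inv_word (l # w) = inv_word w @ [inv_letter l]" by (simp add: inv_word_def)
  then show ?case
    using assms Cons.IH by (auto simp: eval_word_append inv_letter_def inv_mult_group)
qed (simp add: inv_word_def)

lemma eval_word_replicate:
  "(\<And>g. f g \<in> carrier G) \<Longrightarrow> eval_word G f (replicate n (g, True)) = f g [^] n"
  by (induction n) (auto, metis nat_pow_Suc nat_pow_Suc2)

lemma eval_word_pres_eq:
  assumes f: "\<And>g. f g \<in> carrier G" and R: "\<And>r. r \<in> R \<Longrightarrow> eval_word G f r = \<one>"
  shows "(u, v) \<in> pres_eq R \<Longrightarrow> eval_word G f u = eval_word G f v"
proof (induction rule: pres_eq.induct)
  case (cancel u x w)
  have "eval_word G f [x, inv_letter x] = \<one>"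
    using f by (cases x) (auto simp: inv_letter_def)
  then show ?case using f by (simp only: eval_word_append f) (simp add: eval_word_closed[OF f])
next
  case (rel r u w)
  then show ?case using f R by (simp add: eval_word_append)
qed auto

lemma hom_from_presented_group:
  assumes f: "\<And>g. f g \<in> carrier G" and R: "\<And>r. r \<in> R \<Longrightarrow> eval_word G f r = \<one>"
  obtains h where "h \<in> hom (presented_group R) G" and "\<And>w. h (word_class R w) = eval_word G f w"
proof
  define h where "h U = eval_word G f (SOME w. w \<in> U)" for U
  show h_class: "h (word_class R w) = eval_word G f w" for w
  proof -
    have "(SOME x. x \<in> word_class R w) \<in> word_class R w"
      by (rule someI[of _ w]) (simp add: pres_eq.refl)
    then show ?thesis unfolding h_def by (simp add: eval_word_pres_eq[OF f R])
  qed
  show "h \<in> hom (presented_group R) G"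
    by (rule homI) (auto simp: carrier_presented_group mult_presented_group h_class f eval_word_append)
qed

end

lemma word_class_eq_eval_word:
  "word_class R w = eval_word (presented_group R) (\<lambda>g. word_class R [(g, True)]) w"
proof (induction w)
  case (Cons l w)
  obtain g e where l: "l = (g, e)" by (cases l)
  have "inv\<^bsub>presented_group R\<^esub> (word_class R [(g, True)]) = word_class R [(g, False)]"
    by (simp add: inv_presented_group inv_word_def inv_letter_def)
  then show ?case
    using Cons.IH mult_presented_group[of R "[l]" w] l by (cases e) auto
qed (simp add: one_presented_group)

lemma subgroup_presented_group_generators:
  assumes "subgroup K (presented_group R)" and "\<And>g. word_class R [(g, True)] \<in> K"
  shows "K = carrier (presented_group R)"
proof
  show "K \<subseteq> carrier (presented_group R)" using subgroup.subset[OF assms(1)] .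
  have "eval_word (presented_group R) (\<lambda>g. word_class R [(g, True)]) w \<in> K" for w
    by (induction w) (auto intro: assms subgroup.one_closed subgroup.m_closed subgroup.m_inv_closed)
  then show "carrier (presented_group R) \<subseteq> K"
    by (auto simp: carrier_presented_group word_class_eq_eval_word[symmetric])
qed

definition act_word :: "('g \<times> bool \<Rightarrow> 'x \<Rightarrow> 'x) \<Rightarrow> 'g word \<Rightarrow> 'x \<Rightarrow> 'x" where
  "act_word \<rho> w = foldr (\<lambda>l f. \<rho> l \<circ> f) w id"

lemma act_word_Nil [simp]: "act_word \<rho> [] = id"
  by (simp add: act_word_def)

lemma act_word_Cons [simp]: "act_word \<rho> (l # w) = \<rho> l \<circ> act_word \<rho> w"
  by (simp add: act_word_def)

lemma act_word_append: "act_word \<rho> (u @ v) = act_word \<rho> u \<circ> act_word \<rho> v"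
  by (induction u) auto

lemma act_word_pres_eq:
  assumes inv: "\<And>x. \<rho> x \<circ> \<rho> (inv_letter x) = id"
    and R: "\<And>r. r \<in> R \<Longrightarrow> act_word \<rho> r = id"
  shows "(u, v) \<in> pres_eq R \<Longrightarrow> act_word \<rho> u = act_word \<rho> v"
proof (induction rule: pres_eq.induct)
  case (cancel u x w)
  have "\<rho> x (\<rho> (inv_letter x) y) = y" for y
    using inv[of x] by (simp add: fun_eq_iff)
  then show ?case by (simp add: act_word_append comp_def)
next
  case (rel r u w)
  then show ?case by (simp add: act_word_append R)
qed auto

definition commutator_word :: "'g word \<Rightarrow> 'g word \<Rightarrow> 'g word" where
  "commutator_word u v = u @ v @ inv_word u @ inv_word v"

context group
begin

lemma eval_word_commutator_word:
  assumes "\<And>g. f g \<in> carrier G"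
  shows "eval_word G f (commutator_word u v) =
    eval_word G f u \<otimes> eval_word G f v \<otimes> inv (eval_word G f u) \<otimes> inv (eval_word G f v)"
  using assms by (simp add: commutator_word_def eval_word_append eval_word_inv_word m_assoc)

lemma eval_word_append_inv_word_eq_one:
  assumes "\<And>g. f g \<in> carrier G"
  shows "eval_word G f (u @ inv_word v) = \<one> \<longleftrightarrow> eval_word G f u = eval_word G f v"
  using assms inv_solve_right'[of \<one> "eval_word G f u" "eval_word G f v"]
  by (simp add: eval_word_append eval_word_inv_word)

lemma eval_word_inv_word_append_eq_one:
  assumes "\<And>g. f g \<in> carrier G"
  shows "eval_word G f (inv_word v @ u) = \<one> \<longleftrightarrow> eval_word G f u = eval_word G f v"
  using assms inv_solve_left'[of \<one> "eval_word G f v" "eval_word G f u"]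
  by (simp add: eval_word_append eval_word_inv_word)

lemma inv_conj_nat_pow:
  assumes "x \<in> carrier G" and "s \<in> carrier G"
  shows "inv s \<otimes> x [^] (n::nat) \<otimes> s = (inv s \<otimes> x \<otimes> s) [^] n"
proof (induction n)
  case (Suc n)
  have "inv s \<otimes> x [^] Suc n \<otimes> s = (inv s \<otimes> x [^] n \<otimes> s) \<otimes> (inv s \<otimes> x \<otimes> s)"
    using assms by (simp add: m_assoc) (simp add: m_assoc[symmetric])
  then show ?case using Suc by simp
qed (use assms in simp)

lemma commute_inv:
  assumes "x \<in> carrier G" and "y \<in> carrier G" and "x \<otimes> y = y \<otimes> x"
  shows "x \<otimes> inv y = inv y \<otimes> x"
proof -
  have "x \<otimes> inv y = inv y \<otimes> (y \<otimes> x) \<otimes> inv y"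
    using assms(1,2) by (simp add: m_assoc[symmetric])
  also have "\<dots> = inv y \<otimes> (x \<otimes> y) \<otimes> inv y"
    using assms(3) by simp
  also have "\<dots> = inv y \<otimes> x"
    using assms(1,2) by (simp add: m_assoc)
  finally show ?thesis .
qed

lemma commutator_eq_one:
  assumes "x \<in> carrier G" and "y \<in> carrier G" and "x \<otimes> y = y \<otimes> x"
  shows "x \<otimes> y \<otimes> inv x \<otimes> inv y = \<one>"
  using assms by (simp add: m_assoc inv_mult_group[symmetric])

lemma subgroup_mem_of_odd_pow:
  assumes "subgroup H G" and "x \<in> carrier G" and "x \<otimes> x \<in> H" and "x [^] (2 * m + 1 :: nat) \<in> H"
  shows "x \<in> H"
  using assms(4)
proof (induction m)
  case (Suc m)
  have "x [^] (2 * m + 1) = x [^] (2 * Suc m + 1) \<otimes> inv (x \<otimes> x)"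
    using assms(2) by (simp add: nat_pow_mult[symmetric] m_assoc)
  also have "\<dots> \<in> H"
    using Suc.prems subgroup.m_closed[OF assms(1)] subgroup.m_inv_closed[OF assms(1) assms(3)]
    by blast
  finally show ?case by (rule Suc.IH)
qed (use assms(2) in simp)

end

lemma G1q_relators_split:
  "G1q_relators q =
    {inv_word [(gB, True), (gA, True)] @ [(gA, True), (gB, True)],
     ((gS, False) # replicate q (gA, True) @ [(gS, True)]) @ inv_word [(gA, True), (gB, True)],
     ((gT, False) # replicate q (gA, True) @ [(gT, True)]) @ inv_word [(gA, True), (gB, False)]}"
  by (simp add: G1q_relators_def inv_word_def inv_letter_def)

lemma (in group) G1q_relators_eval_iff:
  assumes f: "\<And>g. f g \<in> carrier G"
  shows "(\<forall>r \<in> G1q_relators q. eval_word G f r = \<one>) \<longleftrightarrow>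
    f gA \<otimes> f gB = f gB \<otimes> f gA \<and>
    inv (f gS) \<otimes> f gA [^] q \<otimes> f gS = f gA \<otimes> f gB \<and>
    inv (f gT) \<otimes> f gA [^] q \<otimes> f gT = f gA \<otimes> inv (f gB)"
proof -
  have "eval_word G f (inv_word [(gB, True), (gA, True)] @ [(gA, True), (gB, True)]) = \<one>
      \<longleftrightarrow> f gA \<otimes> f gB = f gB \<otimes> f gA"
    unfolding eval_word_inv_word_append_eq_one[OF f] using f by simp
  moreover have "eval_word G f (((gS, False) # replicate q (gA, True) @ [(gS, True)])
        @ inv_word [(gA, True), (gB, True)]) = \<one>
      \<longleftrightarrow> inv (f gS) \<otimes> f gA [^] q \<otimes> f gS = f gA \<otimes> f gB"
    unfolding eval_word_append_inv_word_eq_one[OF f]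
    using f by (simp add: eval_word_append eval_word_replicate m_assoc)
  moreover have "eval_word G f (((gT, False) # replicate q (gA, True) @ [(gT, True)])
        @ inv_word [(gA, True), (gB, False)]) = \<one>
      \<longleftrightarrow> inv (f gT) \<otimes> f gA [^] q \<otimes> f gT = f gA \<otimes> inv (f gB)"
    unfolding eval_word_append_inv_word_eq_one[OF f]
    using f by (simp add: eval_word_append eval_word_replicate m_assoc)
  ultimately show ?thesis by (simp add: G1q_relators_split)
qed

section \<open>An action of G_{1,q} on the rationals\<close>

definition half_swap :: "rat \<Rightarrow> rat" where
  "half_swap u = (if u \<in> \<int> then u + 1/2 else if u - 1/2 \<in> \<int> then u - 1/2 else u)"

lemma Ints_abs_less_one_eq_0: "(x :: 'a :: linordered_idom) \<in> \<int> \<Longrightarrow> \<bar>x\<bar> < 1 \<Longrightarrow> x = 0"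
  by (elim Ints_cases) (simp flip: of_int_abs)

lemma half_swap_half_swap [simp]: "half_swap (half_swap u) = u"
proof -
  have "u + 1/2 \<notin> \<int>" if "u \<in> \<int>"
    using that Ints_diff[of "u + 1/2" u] Ints_abs_less_one_eq_0[of "1/2"] by auto
  then show ?thesis by (simp add: half_swap_def)
qed

lemma half_swap_plus_one: "half_swap (u + 1) = half_swap u + 1"
proof -
  have Ints_plus_one: "v + 1 \<in> \<int> \<longleftrightarrow> v \<in> \<int>" for v :: rat
    by (metis Ints_1 Ints_add Ints_diff add_diff_cancel)
  have "u + 1 - 1/2 \<in> \<int> \<longleftrightarrow> u - 1/2 \<in> \<int>"
    using Ints_plus_one[of "u - 1/2"] by (simp add: algebra_simps)
  then show ?thesis by (simp add: half_swap_def Ints_plus_one)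
qed

lemma half_swap_fixed:
  assumes "-1/2 < v" and "v < 1/2" and "v \<noteq> 0"
  shows "half_swap v = v"
proof -
  have "v \<notin> \<int>" "v - 1/2 \<notin> \<int>"
    using assms Ints_abs_less_one_eq_0[of v] Ints_abs_less_one_eq_0[of "v - 1/2"]
    by (auto simp: abs_less_iff)
  then show ?thesis by (simp add: half_swap_def)
qed

fun G1q_action :: "nat \<Rightarrow> gen \<times> bool \<Rightarrow> rat \<Rightarrow> rat" where
  "G1q_action q (gA, True) = (\<lambda>u. u + 1)"
| "G1q_action q (gA, False) = (\<lambda>u. u - 1)"
| "G1q_action q (gB, _) = id"
| "G1q_action q (gS, True) = (\<lambda>u. of_nat q * u)"
| "G1q_action q (gS, False) = (\<lambda>u. u / of_nat q)"
| "G1q_action q (gT, True) = (\<lambda>u. of_nat q * half_swap u)"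
| "G1q_action q (gT, False) = (\<lambda>u. half_swap (u / of_nat q))"

lemma G1q_action_inv_letter:
  "q > 0 \<Longrightarrow> G1q_action q x \<circ> G1q_action q (inv_letter x) = id"
  by (cases x; rename_tac g e; case_tac g; case_tac e) (auto simp: inv_letter_def fun_eq_iff)

lemma act_word_G1q_relators:
  assumes "q > 0" and "r \<in> G1q_relators q"
  shows "act_word (G1q_action q) r = id"
proof -
  have replicate_a: "act_word (G1q_action q) (replicate n (gA, True)) = (\<lambda>u. u + of_nat n)" for n
    by (induction n) (auto simp: fun_eq_iff)
  have "half_swap (u - 1) = half_swap u - 1" for u
    using half_swap_plus_one[of "u - 1"] by simp
  moreover have "(of_nat q * (v - 1) + of_nat q) / of_nat q = (v :: rat)" for v
    using assms(1) by (simp add: field_simps)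
  ultimately show ?thesis
    using assms half_swap_plus_one
    by (auto simp: G1q_relators_split act_word_append replicate_a inv_word_def inv_letter_def
        fun_eq_iff)
qed

definition G1q_kernel_word :: "gen word" where
  "G1q_kernel_word = commutator_word [(gS, False), (gA, True), (gS, True)] [(gT, False), (gA, True), (gT, True)]"

lemma act_G1q_kernel_word:
  assumes "odd q" and "3 \<le> q"
  shows "act_word (G1q_action q) G1q_kernel_word 0 = 1/2"
proof -
  define Q where "Q = rat_of_nat q"
  have "Q \<ge> 3" and "Q \<noteq> 4"
    using assms unfolding Q_def by auto
  let ?act = "act_word (G1q_action q)"
  have x: "?act [(gS, False), (gA, True), (gS, True)] u = u + 1/Q"
    and x_inv: "?act (inv_word [(gS, False), (gA, True), (gS, True)]) u = u - 1/Q"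
    and y: "?act [(gT, False), (gA, True), (gT, True)] u = half_swap (half_swap u + 1/Q)"
    and y_inv: "?act (inv_word [(gT, False), (gA, True), (gT, True)]) u = half_swap (half_swap u - 1/Q)"
    for u
    using \<open>Q \<ge> 3\<close> by (simp_all add: inv_word_def inv_letter_def Q_def[symmetric] field_simps)
  have fixed1: "half_swap (1/2 - 1/Q) = 1/2 - 1/Q"
    using \<open>Q \<ge> 3\<close> by (intro half_swap_fixed) (simp_all add: field_simps)
  have fixed2: "half_swap (1/2 - 2/Q) = 1/2 - 2/Q"
    using \<open>Q \<ge> 3\<close> \<open>Q \<noteq> 4\<close> by (intro half_swap_fixed) (simp_all add: field_simps)
  have "half_swap 0 = 1/2" by (simp add: half_swap_def)
  then have "half_swap (half_swap 0 - 1/Q) = 1/2 - 1/Q" using fixed1 by (simp only:)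
  moreover have "half_swap (half_swap (1/2 - 2/Q) + 1/Q) = 1/2 - 1/Q"
    using fixed1 fixed2 by simp
  ultimately show ?thesis
    unfolding G1q_kernel_word_def commutator_word_def act_word_append comp_apply x x_inv y y_inv
    by simp
qed

section \<open>A surjective, non-injective endomorphism\<close>

locale G1q_group = group G for G :: "gen word set monoid" (structure) +
  fixes q :: nat
  assumes G_eq: "G = G1q q" and odd_q: "odd q" and q_ge_3: "3 \<le> q"
begin

abbreviation gen :: "gen \<Rightarrow> gen word set" where
  "gen g \<equiv> word_class (G1q_relators q) [(g, True)]"

abbreviation "ga \<equiv> gen gA"
abbreviation "gb \<equiv> gen gB"
abbreviation "gs \<equiv> gen gS"
abbreviation "gt \<equiv> gen gT"

abbreviation "a_s \<equiv> inv gs \<otimes> ga \<otimes> gs"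
abbreviation "a_t \<equiv> inv gt \<otimes> ga \<otimes> gt"

lemma G_presented: "G = presented_group (G1q_relators q)"
  by (simp add: G_eq G1q_def)

lemma gen_closed [simp]: "gen g \<in> carrier G"
  by (simp add: G_presented carrier_presented_group)

lemma eval_word_gen: "eval_word G gen w = word_class (G1q_relators q) w"
  using word_class_eq_eval_word[of "G1q_relators q" w] by (simp add: G_presented)

lemma G1q_relations:
  "ga \<otimes> gb = gb \<otimes> ga"
  "inv gs \<otimes> ga [^] q \<otimes> gs = ga \<otimes> gb"
  "inv gt \<otimes> ga [^] q \<otimes> gt = ga \<otimes> inv gb"
proof -
  have "\<forall>r \<in> G1q_relators q. eval_word G gen r = \<one>"
    by (metis G_presented eval_word_gen word_class_relator)
  then show "ga \<otimes> gb = gb \<otimes> ga" "inv gs \<otimes> ga [^] q \<otimes> gs = ga \<otimes> gb"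
    "inv gt \<otimes> ga [^] q \<otimes> gt = ga \<otimes> inv gb"
    by (simp_all add: G1q_relators_eval_iff)
qed

lemma product_ab_ab_inv:
  "(ga \<otimes> gb) \<otimes> (ga \<otimes> inv gb) = ga \<otimes> ga"
  "(ga \<otimes> inv gb) \<otimes> (ga \<otimes> gb) = ga \<otimes> ga"
proof -
  have "(ga \<otimes> gb) \<otimes> (ga \<otimes> inv gb) = ga \<otimes> (gb \<otimes> ga) \<otimes> inv gb"
    by (simp add: m_assoc)
  then show "(ga \<otimes> gb) \<otimes> (ga \<otimes> inv gb) = ga \<otimes> ga"
    by (simp add: G1q_relations(1)[symmetric] m_assoc)
  have "(ga \<otimes> inv gb) \<otimes> (ga \<otimes> gb) = ga \<otimes> (inv gb \<otimes> ga) \<otimes> gb"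
    by (simp add: m_assoc)
  then show "(ga \<otimes> inv gb) \<otimes> (ga \<otimes> gb) = ga \<otimes> ga"
    by (simp add: commute_inv[OF gen_closed gen_closed G1q_relations(1), symmetric] m_assoc)
qed

lemma endomorphism_exists:
  obtains \<phi> where "\<phi> \<in> hom G G"
    and "\<phi> ga = ga [^] q" and "\<phi> gb = gb [^] q" and "\<phi> gs = gs" and "\<phi> gt = gt"
proof -
  define f where "f g = (case g of gA \<Rightarrow> ga [^] q | gB \<Rightarrow> gb [^] q | _ \<Rightarrow> gen g)" for g
  have f_closed: "f g \<in> carrier G" for g
    by (cases g) (simp_all add: f_def)
  have ab_comm: "ga \<otimes> inv gb = inv gb \<otimes> ga"
    using commute_inv G1q_relations(1) by simp
  have "ga [^] q \<otimes> gb = gb \<otimes> ga [^] q"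
    using G1q_relations(1) by (simp add: group_commutes_pow)
  then have "f gA \<otimes> f gB = f gB \<otimes> f gA"
    using group_commutes_pow[of gb "ga [^] q" q] by (simp add: f_def)
  moreover have "inv gs \<otimes> (ga [^] q) [^] q \<otimes> gs = (inv gs \<otimes> ga [^] q \<otimes> gs) [^] q"
    by (simp add: inv_conj_nat_pow)
  then have "inv (f gS) \<otimes> f gA [^] q \<otimes> f gS = f gA \<otimes> f gB"
    using G1q_relations(2) pow_mult_distrib[OF G1q_relations(1)] by (simp add: f_def)
  moreover have "inv gt \<otimes> (ga [^] q) [^] q \<otimes> gt = (inv gt \<otimes> ga [^] q \<otimes> gt) [^] q"
    by (simp add: inv_conj_nat_pow)
  then have "inv (f gT) \<otimes> f gA [^] q \<otimes> f gT = f gA \<otimes> inv (f gB)"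
    using G1q_relations(3) pow_mult_distrib[OF ab_comm] by (simp add: f_def nat_pow_inv)
  ultimately have "\<And>r. r \<in> G1q_relators q \<Longrightarrow> eval_word G f r = \<one>"
    using G1q_relators_eval_iff[of f q] f_closed by blast
  then obtain \<phi> where \<phi>: "\<phi> \<in> hom (presented_group (G1q_relators q)) G"
    and \<phi>_class: "\<And>w. \<phi> (word_class (G1q_relators q) w) = eval_word G f w"
    using hom_from_presented_group[of f "G1q_relators q"] f_closed by blast
  have "\<phi> (gen g) = f g" for g
    using \<phi>_class[of "[(g, True)]"] f_closed by simp
  then show thesis
    by (intro that[of \<phi>]) (simp_all add: \<phi>[folded G_presented] f_def)
qed

lemma endomorphism_surjective:
  assumes \<phi>: "\<phi> \<in> hom G G"
    and "\<phi> ga = ga [^] q" and "\<phi> gb = gb [^] q" and "\<phi> gs = gs" and "\<phi> gt = gt"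
  shows "\<phi> ` carrier G = carrier G"
proof -
  let ?I = "\<phi> ` carrier G"
  have I: "subgroup ?I G"
    using \<phi> by (intro group_hom.img_is_subgroup) (simp add: group_hom_def group_hom_axioms_def is_group)
  have "ga [^] q \<in> ?I" "gb [^] q \<in> ?I" "gs \<in> ?I" "gt \<in> ?I"
    using assms(2-5) by (metis gen_closed image_eqI)+
  then have "ga \<otimes> gb \<in> ?I" and "ga \<otimes> inv gb \<in> ?I"
    unfolding G1q_relations(2,3)[symmetric]
    by (simp_all add: subgroup.m_closed[OF I] subgroup.m_inv_closed[OF I])
  moreover note product_ab_ab_inv(1)[symmetric]
  moreover have "gb \<otimes> gb = inv (ga \<otimes> inv gb) \<otimes> (ga \<otimes> gb)"
    by (simp add: inv_mult_group m_assoc) (simp add: m_assoc[symmetric])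
  ultimately have "ga \<otimes> ga \<in> ?I" and "gb \<otimes> gb \<in> ?I"
    by (simp_all add: subgroup.m_closed[OF I] subgroup.m_inv_closed[OF I])
  moreover obtain m where q: "q = 2 * m + 1"
    using odd_q oddE by blast
  ultimately have "ga \<in> ?I" "gb \<in> ?I"
    using subgroup_mem_of_odd_pow[OF I gen_closed, where m = m] \<open>ga [^] q \<in> ?I\<close> \<open>gb [^] q \<in> ?I\<close>
    unfolding q[symmetric] by auto
  then have "gen g \<in> ?I" for g
    using \<open>gs \<in> ?I\<close> \<open>gt \<in> ?I\<close> by (cases g) simp_all
  then show ?thesis
    using subgroup_presented_group_generators[of ?I "G1q_relators q"] I
    unfolding G_presented[symmetric] by blast
qed

lemma kernel_element_ne_one:
  "a_s \<otimes> a_t \<otimes> inv a_s \<otimes> inv a_t \<noteq> \<one>"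
proof
  assume "a_s \<otimes> a_t \<otimes> inv a_s \<otimes> inv a_t = \<one>"
  moreover have "eval_word G gen G1q_kernel_word = a_s \<otimes> a_t \<otimes> inv a_s \<otimes> inv a_t"
    by (simp add: G1q_kernel_word_def eval_word_commutator_word m_assoc)
  ultimately have "word_class (G1q_relators q) G1q_kernel_word = \<one>"
    by (simp add: eval_word_gen)
  then have "(G1q_kernel_word, []) \<in> pres_eq (G1q_relators q)"
    by (simp add: G_presented one_presented_group word_class_eq_iff)
  then have "act_word (G1q_action q) G1q_kernel_word = act_word (G1q_action q) []"
    using q_ge_3 act_word_pres_eq[OF G1q_action_inv_letter act_word_G1q_relators] by simp
  then show False
    using act_G1q_kernel_word[OF odd_q q_ge_3] by simp
qed

lemma endomorphism_not_injective:
  assumes \<phi>: "\<phi> \<in> hom G G"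
    and "\<phi> ga = ga [^] q" and "\<phi> gb = gb [^] q" and "\<phi> gs = gs" and "\<phi> gt = gt"
  shows "\<not> inj_on \<phi> (carrier G)"
proof
  assume inj: "inj_on \<phi> (carrier G)"
  interpret \<phi>: group_hom G G \<phi>
    using \<phi> by (simp add: group_hom_def group_hom_axioms_def is_group)
  have "\<phi> a_s = ga \<otimes> gb" and "\<phi> a_t = ga \<otimes> inv gb"
    using assms G1q_relations(2,3) by simp_all
  then have "\<phi> (a_s \<otimes> a_t \<otimes> inv a_s \<otimes> inv a_t) = \<phi> \<one>"
    using commutator_eq_one[of "ga \<otimes> gb" "ga \<otimes> inv gb"] product_ab_ab_inv by simp
  then have "a_s \<otimes> a_t \<otimes> inv a_s \<otimes> inv a_t = \<one>"
    by (rule inj_onD[OF inj]) simp_all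
  with kernel_element_ne_one show False ..
qed

lemma not_hopfian: "\<not> hopfian G"
proof -
  obtain \<phi> where "\<phi> \<in> hom G G"
    and "\<phi> ga = ga [^] q" and "\<phi> gb = gb [^] q" and "\<phi> gs = gs" and "\<phi> gt = gt"
    by (rule endomorphism_exists)
  then show ?thesis
    unfolding hopfian_def using endomorphism_surjective endomorphism_not_injective by blast
qed

end

theorem theorem3p1:
  fixes q :: nat
  assumes "odd q" and "q \<ge> 3"
  shows "group (G1q q) \<and> \<not> hopfian (G1q q)"
proof -
  have "group (G1q q)"
    unfolding G1q_def by (rule group_presented_group)
  then interpret G1q_group "G1q q" q
    using assms by (simp add: G1q_group_def G1q_group_axioms_def)
  show ?thesis
    using is_group not_hopfian by simp
qed

end
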